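(* Let $Z$ be a domain, $\pi$ a probability distribution on $Z$, $0\le a\le b$, $\mathcal{F}$ a family of functions from $Z$ to $[a,b]$, $p\in(0,1)$ and $n\ge1$. The function $g:Z^n\to\mathbb{R}$, \[g(X_1,\dots,X_n)=\sup_{f\in\mathcal{F}}\frac{\mathbb{E}_\pi[f]-\frac1n\sum_{i=1}^n f(X_i)}{\max\{p,\mathbb{E}_\pi[f]\}},\] satisfies the bounded difference inequality with constants $c_i=\frac{|b-a|}{np}$, $1\le i\le n$.
   Context: A function $g:\mathcal{X}^n\to\mathbb{R}$ satisfies the bounded difference inequality with nonnegative constants $c_1,\dots,c_n$ if for every $i$, $\sup_{x_1,\dots,x_n,x_i'\in\mathcal{X}}|g(x_1,\dots,x_n)-g(x_1,\dots,x_{i-1},x_i',x_{i+1},\dots,x_n)|\le c_i$. *)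

theory Defs
  imports "HOL-Probability.Probability"
begin

text \<open>Bounded difference inequality for g : X^n -> R, where points of X^n are
  represented as functions x :: nat => 'a, coordinates indexed by 0..n-1.\<close>
definition bounded_difference ::
  "'a set \<Rightarrow> nat \<Rightarrow> ((nat \<Rightarrow> 'a) \<Rightarrow> real) \<Rightarrow> (nat \<Rightarrow> real) \<Rightarrow> bool" where
  "bounded_difference X n g c \<longleftrightarrow>
     (\<forall>i<n. \<forall>x y. (\<forall>j<n. x j \<in> X) \<longrightarrow> y \<in> X \<longrightarrow> \<bar>g x - g (x(i := y))\<bar> \<le> c i)"

end

theory Submission
  imports Defs
begin

text \<open>Replacing one sample \<open>X\<^sub>i\<close> by \<open>X\<^sub>i'\<close> changes the numerator of each quotient by
  \<open>(f X\<^sub>i' - f X\<^sub>i)/n\<close>, of modulus at most \<open>(b - a)/n\<close>, while the denominator is at least \<open>p\<close>.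
  Every quotient is at most \<open>1\<close> because \<open>f \<ge> 0\<close>, so the suprema are finite and differ by at
  most the uniform bound \<open>(b - a)/(n p)\<close> on the differences of the quotients.
  The expectation only enters as a fixed real number.\<close>

lemma abs_SUP_diff_le:
  fixes g h :: "'b \<Rightarrow> real"
  assumes "A \<noteq> {}" and "bdd_above (g ` A)" and "bdd_above (h ` A)"
    and "\<And>f. f \<in> A \<Longrightarrow> \<bar>g f - h f\<bar> \<le> c"
  shows "\<bar>(SUP f\<in>A. g f) - (SUP f\<in>A. h f)\<bar> \<le> c"
proof -
  have "(SUP f\<in>A. g f) \<le> (SUP f\<in>A. h f) + c"
  proof (rule cSUP_least[OF assms(1)])
    fix f assume "f \<in> A"
    then show "g f \<le> (SUP f\<in>A. h f) + c"
      using cSUP_upper[OF _ assms(3)] assms(4) by fastforce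
  qed
  moreover have "(SUP f\<in>A. h f) \<le> (SUP f\<in>A. g f) + c"
  proof (rule cSUP_least[OF assms(1)])
    fix f assume "f \<in> A"
    then show "h f \<le> (SUP f\<in>A. g f) + c"
      using cSUP_upper[OF _ assms(2)] assms(4) by fastforce
  qed
  ultimately show ?thesis by linarith
qed

lemma sum_lessThan_fun_upd:
  fixes f :: "'a \<Rightarrow> 'b::ab_group_add" and i n :: nat
  assumes "i < n"
  shows "(\<Sum>j<n. f ((x(i := y)) j)) = (\<Sum>j<n. f (x j)) - f (x i) + f y"
proof -
  have "(\<Sum>j<n. f ((x(i := y)) j)) = f ((x(i := y)) i) + (\<Sum>j\<in>{..<n}-{i}. f ((x(i := y)) j))"
    and "(\<Sum>j<n. f (x j)) = f (x i) + (\<Sum>j\<in>{..<n}-{i}. f (x j))"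
    using assms by (simp_all add: sum.remove)
  moreover have "(\<Sum>j\<in>{..<n}-{i}. f ((x(i := y)) j)) = (\<Sum>j\<in>{..<n}-{i}. f (x j))"
    by (intro sum.cong) auto
  ultimately show ?thesis by (simp add: algebra_simps)
qed

lemma normalized_deviation_le_1:
  fixes e p :: real and v :: "nat \<Rightarrow> real"
  assumes "0 < p" and "0 < n" and "\<And>j. j < n \<Longrightarrow> 0 \<le> v j"
  shows "(e - (1 / real n) * (\<Sum>j<n. v j)) / max p e \<le> 1"
proof -
  have "0 \<le> (\<Sum>j<n. v j)" using assms(3) by (intro sum_nonneg) simp
  then have "0 \<le> (1 / real n) * (\<Sum>j<n. v j)" by simp
  then have "e - (1 / real n) * (\<Sum>j<n. v j) \<le> max p e" by linarith
  then show ?thesis using assms(1) by simp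
qed

lemma normalized_deviation_update_diff:
  fixes e p :: real and f :: "'a \<Rightarrow> real"
  assumes "0 < p" and "0 < n" and "i < n" and "\<bar>f y - f (x i)\<bar> \<le> d"
  shows "\<bar>(e - (1 / real n) * (\<Sum>j<n. f (x j))) / max p e
          - (e - (1 / real n) * (\<Sum>j<n. f ((x(i := y)) j))) / max p e\<bar>
         \<le> d / (real n * p)"
proof -
  let ?M = "max p e"
  have n: "real n > 0" using assms(2) by simp
  have M: "?M > 0" using assms(1) by simp
  have "(e - (1 / real n) * (\<Sum>j<n. f (x j))) / ?M
          - (e - (1 / real n) * (\<Sum>j<n. f ((x(i := y)) j))) / ?M
        = (f y - f (x i)) / (real n * ?M)"
    using n M unfolding sum_lessThan_fun_upd[OF assms(3)] by (simp add: field_simps)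
  also have "\<bar>\<dots>\<bar> = \<bar>f y - f (x i)\<bar> / (real n * ?M)"
    using n M by (simp add: abs_div)
  also have "\<dots> \<le> d / (real n * p)"
    using n assms(1,4) by (intro frac_le) (auto intro: mult_left_mono)
  finally show ?thesis .
qed

theorem lemma5:
  fixes \<pi> :: "'z measure" and F :: "('z \<Rightarrow> real) set"
    and a b p :: real and n :: nat
  assumes "prob_space \<pi>"
    and "0 \<le> a" and "a \<le> b"
    and "\<And>f. f \<in> F \<Longrightarrow> f \<in> borel_measurable \<pi>"
    and "\<And>f z. f \<in> F \<Longrightarrow> z \<in> space \<pi> \<Longrightarrow> a \<le> f z \<and> f z \<le> b"
    and "0 < p" and "p < 1" and "1 \<le> n"
  shows "bounded_difference (space \<pi>) n
           (\<lambda>x. SUP f\<in>F. ((\<integral>z. f z \<partial>\<pi>) - (1 / real n) * (\<Sum>i<n. f (x i)))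
                          / max p (\<integral>z. f z \<partial>\<pi>))
           (\<lambda>i. \<bar>b - a\<bar> / (real n * p))"
  unfolding bounded_difference_def
proof (intro allI impI)
  fix i x y
  assume i: "i < n" and x: "\<forall>j<n. x j \<in> space \<pi>" and y: "y \<in> space \<pi>"
  let ?g = "\<lambda>x f. ((\<integral>z. f z \<partial>\<pi>) - (1 / real n) * (\<Sum>i<n. f (x i))) / max p (\<integral>z. f z \<partial>\<pi>)"
  have n: "0 < n" using assms(8) by simp
  have bdd: "bdd_above (?g w ` F)" if "\<forall>j<n. w j \<in> space \<pi>" for w
    using that assms(2,5) normalized_deviation_le_1[OF assms(6) n]
    by (intro bdd_aboveI2[where M = 1]) (meson order_trans)
  show "\<bar>(SUP f\<in>F. ?g x f) - (SUP f\<in>F. ?g (x(i := y)) f)\<bar> \<le> \<bar>b - a\<bar> / (real n * p)"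
  proof (cases "F = {}")
    case False
    have "\<bar>f y - f (x i)\<bar> \<le> \<bar>b - a\<bar>" if "f \<in> F" for f
      using assms(5)[OF that y] assms(5)[OF that] x i by fastforce
    then show ?thesis
      using x y i
      by (intro abs_SUP_diff_le[OF False] bdd normalized_deviation_update_diff[OF assms(6) n i])
        auto
  qed (use assms(6) in simp)
qed

end
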